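(* Let $\lambda$ and $g$ be as in the context. Let $b^{(1)}\in[0,c^{(1)}]$ be the point with $g(b^{(1)})=0$ and set $b^{(2)}=b^{(1)}/\lambda$. Then $g(b^{(2)})=b^{(1)}$.
   Context: There is a unique constant $\lambda=2.5029\ldots$ and a unique infinitely (period-doubling) renormalizable analytic unimodal map $g:[-1,1]\to[-1,1]$ solving $g(x)=-\lambda\, g^{2}(-x/\lambda)$ for $-1\le x\le1$ ($g^2=g\circ g$). Unimodal means: $-1$ is the unique fixed point with positive multiplier, $g(1)=-1$, and $g$ has a unique maximum at an interior nondegenerate critical point $c^{(0)}$. Moreover $g$ is analytic near $[-1,1]$, even, concave on $[-c^{(1)},c^{(1)}]$ where $c^{(1)}=g(c^{(0)})$, satisfies $g(c^{(1)})=-c^{(1)}/\lambda$, $g'(c^{(1)})=-\lambda$, and has negative Schwarzian derivative. *)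

theory Defs
  imports "HOL-Analysis.Analysis" "HOL-Complex_Analysis.Complex_Analysis"
begin

definition schwarzian :: "(real \<Rightarrow> real) \<Rightarrow> real \<Rightarrow> real" where
  "schwarzian g x = deriv (deriv (deriv g)) x / deriv g x
      - 3 / 2 * (deriv (deriv g) x / deriv g x)^2"

definition analytic_near_interval :: "(real \<Rightarrow> real) \<Rightarrow> bool" where
  "analytic_near_interval g \<longleftrightarrow>
     (\<exists>S G. open S \<and> complex_of_real ` {-1..1} \<subseteq> S \<and> G holomorphic_on S \<and>
        (\<forall>x. complex_of_real x \<in> S \<longrightarrow> G (complex_of_real x) = complex_of_real (g x)))"

definition unimodal :: "(real \<Rightarrow> real) \<Rightarrow> real \<Rightarrow> bool" where
  "unimodal g c0 \<longleftrightarrow>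
     g (-1) = -1 \<and> deriv g (-1) > 0 \<and>
     (\<forall>x\<in>{-1..1}. g x = x \<and> deriv g x > 0 \<longrightarrow> x = -1) \<and>
     g 1 = -1 \<and>
     c0 \<in> {-1<..<1} \<and> (\<forall>x\<in>{-1..1}. x \<noteq> c0 \<longrightarrow> g x < g c0) \<and>
     deriv g c0 = 0 \<and> deriv (deriv g) c0 \<noteq> 0"

definition feigenbaum_fixed_point :: "real \<Rightarrow> (real \<Rightarrow> real) \<Rightarrow> real \<Rightarrow> bool" where
  "feigenbaum_fixed_point lam g c0 \<longleftrightarrow>
     2.5029 \<le> lam \<and> lam < 2.503 \<and>
     g ` {-1..1} \<subseteq> {-1..1} \<and>
     (\<forall>x\<in>{-1..1}. g x = - lam * g (g (- x / lam))) \<and>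
     unimodal g c0 \<and>
     analytic_near_interval g \<and>
     (\<forall>x\<in>{-1..1}. g (- x) = g x) \<and>
     concave_on {- g c0 .. g c0} g \<and>
     g (g c0) = - g c0 / lam \<and>
     deriv g (g c0) = - lam \<and>
     (\<forall>x\<in>{-1..1}. x \<noteq> c0 \<longrightarrow> schwarzian g x < 0)"

end

theory Submission
  imports Defs
begin

text \<open>Evenness and the functional equation at \<open>-b\<^sub>1\<close> make \<open>y = g (b\<^sub>1/\<lambda>)\<close>
  a zero of \<open>g\<close>. On \<open>[0, g 0]\<close> the concave map \<open>g\<close> starts at the positive value
  \<open>g 0\<close>, so it is positive before any point where it is nonnegative; hence \<open>y > 0\<close>
  (as \<open>b\<^sub>1/\<lambda> < b\<^sub>1\<close>), and \<open>g\<close> has only one zero there, so \<open>y = b\<^sub>1\<close>.\<close>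

lemma concave_on_pos_before_nonneg:
  fixes g :: "real \<Rightarrow> real"
  assumes conc: "concave_on S g" and "a \<in> S" "z \<in> S"
    and "g a > 0" "g z \<ge> 0" "a \<le> x" "x < z"
  shows "g x > 0"
proof -
  define t where "t = (x - a) / (z - a)"
  have t: "0 \<le> t" "t < 1" using assms by (auto simp: t_def field_simps)
  have "t * (z - a) = x - a" using assms by (simp add: t_def)
  hence "x = (1 - t) *\<^sub>R a + t *\<^sub>R z" by (simp add: algebra_simps)
  hence "g x \<ge> (1 - t) * g a + t * g z"
    using concave_onD[OF conc, of t a z] t assms by simp
  moreover have "(1 - t) * g a + t * g z > 0"
    using t assms by (simp add: add_pos_nonneg)
  ultimately show ?thesis by linarith
qed

lemma concave_on_zero_unique:
  fixes g :: "real \<Rightarrow> real"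
  assumes "concave_on S g" and "a \<in> S" "y \<in> S" "z \<in> S"
    and "g a > 0" "a \<le> y" "a \<le> z" "g y = 0" "g z = 0"
  shows "y = z"
  using concave_on_pos_before_nonneg[OF assms(1,2,3,5), of z]
    concave_on_pos_before_nonneg[OF assms(1,2,4,5), of y] assms(6-9)
  by (cases y z rule: linorder_cases) auto

lemma even_unique_max_at_zero:
  fixes g :: "real \<Rightarrow> real"
  assumes even: "\<And>x. x \<in> {-r..r} \<Longrightarrow> g (- x) = g x"
    and max: "\<And>x. x \<in> {-r..r} \<Longrightarrow> x \<noteq> c \<Longrightarrow> g x < g c"
    and "c \<in> {-r..r}"
  shows "c = 0"
  using max[of "- c"] even[of c] assms(3) by (cases "c = 0") auto

lemma feigenbaum_fixed_point_critical_point: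
  assumes "feigenbaum_fixed_point lam g c0"
  shows "c0 = 0"
proof (rule even_unique_max_at_zero[where g = g and r = 1])
  note F = assms[unfolded feigenbaum_fixed_point_def unimodal_def]
  show "\<And>x. x \<in> {-1..1} \<Longrightarrow> g (- x) = g x" using F by blast
  show "\<And>x. x \<in> {-1..1} \<Longrightarrow> x \<noteq> c0 \<Longrightarrow> g x < g c0" using F by blast
  have "c0 \<in> {-1<..<1}" using F by blast
  then show "c0 \<in> {-1..1}" by simp
qed

lemma feigenbaum_fixed_point_zero_of_image:
  assumes "feigenbaum_fixed_point lam g c0" and "b \<in> {-1..1}" and "g b = 0"
  shows "g (g (b / lam)) = 0"
proof -
  note F = assms(1)[unfolded feigenbaum_fixed_point_def]
  have "2.5029 \<le> lam" using F by blast
  have feig: "\<forall>x\<in>{-1..1}. g x = - lam * g (g (- x / lam))" using F by blast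
  have even: "\<forall>x\<in>{-1..1}. g (- x) = g x" using F by blast
  have "g (- b) = - lam * g (g (b / lam))" using feig assms(2) by simp
  moreover have "g (- b) = 0" using even assms(2,3) by simp
  ultimately show ?thesis using \<open>2.5029 \<le> lam\<close> by simp
qed

theorem mainTheorem4:
  fixes lam :: real and g :: "real \<Rightarrow> real" and c0 b1 :: real
  assumes "feigenbaum_fixed_point lam g c0"
    and "b1 \<in> {0 .. g c0}"
    and "g b1 = 0"
  shows "g (b1 / lam) = b1"
proof (cases "b1 = 0")
  case True
  then show ?thesis using assms(3) by simp
next
  case False
  note F = assms(1)[unfolded feigenbaum_fixed_point_def unimodal_def]
  have c0: "c0 = 0" using feigenbaum_fixed_point_critical_point[OF assms(1)] .
  have "2.5029 \<le> lam" using F by blast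
  hence lam: "lam > 1" by simp
  have conc: "concave_on {- g 0 .. g 0} g" using F c0 by blast
  have "g ` {-1..1} \<subseteq> {-1..1}" using F by blast
  hence "g 0 \<in> {-1..1}" by (rule subsetD) simp
  moreover have "0 \<le> b1" "b1 \<le> g 0" using assms(2) c0 by simp_all
  ultimately have b1: "0 < b1" "b1 \<le> g 0" "b1 \<in> {-1..1}" using False by simp_all
  have zero: "g (g (b1 / lam)) = 0"
    using feigenbaum_fixed_point_zero_of_image[OF assms(1) b1(3) assms(3)] .
  have x: "0 \<le> b1 / lam" "b1 / lam < b1" "b1 / lam \<in> {-1..1}"
    using b1 lam by (auto simp: field_simps)
  have pos: "g (b1 / lam) > 0"
    by (rule concave_on_pos_before_nonneg[OF conc, of 0 b1]) (use b1 assms(3) x in auto)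
  have max: "\<forall>x\<in>{-1..1}. x \<noteq> c0 \<longrightarrow> g x < g c0" using F by blast
  have "b1 / lam \<noteq> c0" using b1 lam c0 by simp
  hence "g (b1 / lam) < g 0" using max x(3) c0 by blast
  hence "g (b1 / lam) \<in> {- g 0 .. g 0}" "b1 \<in> {- g 0 .. g 0}" "0 \<in> {- g 0 .. g 0}"
    using pos b1 by auto
  with concave_on_zero_unique[OF conc] pos b1 zero assms(3)
  show ?thesis by (meson less_imp_le less_le_trans)
qed

end
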